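(* Let $p,N\in\mathbb{N}$, $x_0<\cdots<x_N$, data $y_{n,2k}\in\mathbb{R}$ ($n=0,\dots,N$, $k=0,\dots,p$), and $\alpha\in\Theta_{2p}$. Let $\ell_\alpha$ be the Lidstone FIF and $\phi$ the classical Lidstone interpolation function for this data. Then for $k=1,\dots,p$, $$\|\ell_\alpha^{(2k)}-\phi^{(2k)}\|_\infty\le\frac{|\alpha|_\infty}{\mu^{2k}-|\alpha|_\infty}\big(\|\phi^{(2k)}\|_\infty+M_{2k,2p}\big),$$ where $\mu=\min_{1\le n\le N}a_n$ and $M_{2k,2p}=\frac{2\rho\pi}{3}\sum_{l=0}^{p-k}\big(\frac{x_N-x_0}{\pi}\big)^{2l}$.
   Context: Lidstone polynomials $\Lambda_l$: $\Lambda_0(x)=x$, $\Lambda_l''=\Lambda_{l-1}$, $\Lambda_l(0)=\Lambda_l(1)=0$ for $l\ge1$. $a_n=\frac{x_n-x_{n-1}}{x_N-x_0}$, $L_n(x)=a_nx+\frac{x_Nx_{n-1}-x_0x_n}{x_N-x_0}$. $\Theta_{2p}=\{\alpha\in\mathbb{R}^N:|\alpha_n|<a_n^{2p}\ \forall n\}$. For $\alpha\in\Theta_{2p}$, the Lidstone FIF $\ell_\alpha$ is the unique $C^{2p}[x_0,x_N]$ function satisfying $\ell_\alpha(L_n(x))=\alpha_n\ell_\alpha(x)+q_n(x)$ for $x\in[x_0,x_N]$, $n=1,\dots,N$, where $q_n(x)=\sum_{l=0}^p[(a_n^{2l}y_{n-1,2l}-\alpha_ny_{0,2l})\Lambda_l(\frac{x_N-x}{x_N-x_0})+(a_n^{2l}y_{n,2l}-\alpha_ny_{N,2l})\Lambda_l(\frac{x-x_0}{x_N-x_0})](x_N-x_0)^{2l}$;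 it satisfies $\ell_\alpha^{(2k)}(x_n)=y_{n,2k}$. The classical Lidstone interpolation function $\phi$ is defined on each $[x_{n-1},x_n]$, with $h_n=x_n-x_{n-1}$, by $\phi(x)=\sum_{l=0}^p\big[y_{n-1,2l}\Lambda_l(\frac{x_n-x}{h_n})+y_{n,2l}\Lambda_l(\frac{x-x_{n-1}}{h_n})\big]h_n^{2l}$ (it equals $\ell_0$). Notation: $|\alpha|_\infty=\max_n|\alpha_n|$, $\|f\|_\infty=\sup_{[x_0,x_N]}|f|$, $\rho=\max_{0\le k\le p}\max\{|y_{0,2k}|,|y_{N,2k}|\}$.
   Formalization: The bound holds only for those $\alpha\in\Theta_{2p}$ that also satisfy $|\alpha|_\infty<\mu^{2k}$, a condition membership in $\Theta_{2p}$ does not give. The statement above fails without it. *)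

theory Defs
  imports "HOL-Analysis.Analysis"
begin

primrec lidstone :: "nat \<Rightarrow> real \<Rightarrow> real" where
  "lidstone 0 = (\<lambda>t. t)"
| "lidstone (Suc l) =
     (THE g. (\<forall>t. (g has_real_derivative deriv g t) (at t) \<and>
                  (deriv g has_real_derivative lidstone l t) (at t))
             \<and> g 0 = 0 \<and> g 1 = 0)"

definition a_coef :: "(nat \<Rightarrow> real) \<Rightarrow> nat \<Rightarrow> nat \<Rightarrow> real" where
  "a_coef x N n = (x n - x (n - 1)) / (x N - x 0)"

definition L_map :: "(nat \<Rightarrow> real) \<Rightarrow> nat \<Rightarrow> nat \<Rightarrow> real \<Rightarrow> real" where
  "L_map x N n t = a_coef x N n * t + (x N * x (n - 1) - x 0 * x n) / (x N - x 0)"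

definition Theta :: "nat \<Rightarrow> (nat \<Rightarrow> real) \<Rightarrow> nat \<Rightarrow> (nat \<Rightarrow> real) set" where
  "Theta p x N = {\<alpha>. \<forall>n\<in>{1..N}. \<bar>\<alpha> n\<bar> < a_coef x N n ^ (2 * p)}"

text \<open>y n j stands for y_{n,j} (only even j = 2l are used).\<close>
definition q_fun :: "nat \<Rightarrow> (nat \<Rightarrow> real) \<Rightarrow> nat \<Rightarrow> (nat \<Rightarrow> nat \<Rightarrow> real)
                      \<Rightarrow> (nat \<Rightarrow> real) \<Rightarrow> nat \<Rightarrow> real \<Rightarrow> real" where
  "q_fun p x N y \<alpha> n t =
     (\<Sum>l=0..p. ((a_coef x N n ^ (2*l) * y (n - 1) (2*l) - \<alpha> n * y 0 (2*l))
                   * lidstone l ((x N - t) / (x N - x 0))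
                 + (a_coef x N n ^ (2*l) * y n (2*l) - \<alpha> n * y N (2*l))
                   * lidstone l ((t - x 0) / (x N - x 0))) * (x N - x 0) ^ (2*l))"

text \<open>The piece of the classical Lidstone interpolant phi on [x_{n-1}, x_n].\<close>
definition phi_piece :: "nat \<Rightarrow> (nat \<Rightarrow> real) \<Rightarrow> (nat \<Rightarrow> nat \<Rightarrow> real) \<Rightarrow> nat \<Rightarrow> real \<Rightarrow> real" where
  "phi_piece p x y n t =
     (\<Sum>l=0..p. (y (n - 1) (2*l) * lidstone l ((x n - t) / (x n - x (n - 1)))
                 + y n (2*l) * lidstone l ((t - x (n - 1)) / (x n - x (n - 1))))
                * (x n - x (n - 1)) ^ (2*l))"

definition alpha_norm :: "nat \<Rightarrow> (nat \<Rightarrow> real) \<Rightarrow> real" where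
  "alpha_norm N \<alpha> = Max ((\<lambda>n. \<bar>\<alpha> n\<bar>) ` {1..N})"

definition mu_min :: "(nat \<Rightarrow> real) \<Rightarrow> nat \<Rightarrow> real" where
  "mu_min x N = Min (a_coef x N ` {1..N})"

definition rho_max :: "nat \<Rightarrow> nat \<Rightarrow> (nat \<Rightarrow> nat \<Rightarrow> real) \<Rightarrow> real" where
  "rho_max p N y = Max ((\<lambda>k. max \<bar>y 0 (2*k)\<bar> \<bar>y N (2*k)\<bar>) ` {0..p})"

definition M_const :: "nat \<Rightarrow> nat \<Rightarrow> (nat \<Rightarrow> real) \<Rightarrow> nat \<Rightarrow> (nat \<Rightarrow> nat \<Rightarrow> real) \<Rightarrow> real" where
  "M_const k p x N y = 2 * rho_max p N y * pi / 3 * (\<Sum>l=0..p-k. ((x N - x 0) / pi) ^ (2*l))"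

end

theory Submission
  imports Defs
begin

text \<open>
  Every function in sight is a Lidstone interpolant \<open>lidstone_interp\<close>: a combination of the
  Lidstone polynomials \<open>\<Lambda>\<^sub>l\<close> on some interval.  We first show that the \<open>\<Lambda>\<^sub>l\<close> are well-defined smooth
  polynomials with \<open>\<Lambda>\<^sub>l\<^sup>(\<^sup>2\<^sup>k\<^sup>) = \<Lambda>\<^sub>l\<^sub>-\<^sub>k\<close> and \<open>|\<Lambda>\<^sub>i\<^sub>+\<^sub>1| \<le> 1 / (3 \<pi>\<^sup>2\<^sup>i\<^sup>+\<^sup>1)\<close> on \<open>[0, 1]\<close> (via a sine comparison
  and the maximum principle for convex functions).

  Differentiating the functional equation \<open>\<ell>\<^sub>\<alpha>(L\<^sub>n x) = \<alpha>\<^sub>n \<ell>\<^sub>\<alpha>(x) + q\<^sub>n(x)\<close> \<open>2 k\<close> times shows that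
  \<open>a\<^sub>n\<^sup>2\<^sup>k (\<ell>\<^sub>\<alpha>\<^sup>(\<^sup>2\<^sup>k\<^sup>) - \<phi>\<^sup>(\<^sup>2\<^sup>k\<^sup>))(L\<^sub>n x) = \<alpha>\<^sub>n (\<ell>\<^sub>\<alpha>\<^sup>(\<^sup>2\<^sup>k\<^sup>) - P\<^sup>(\<^sup>2\<^sup>k\<^sup>))(x)\<close>.  Taking suprema over the pieces gives
  \<open>\<mu>\<^sup>2\<^sup>k E \<le> |\<alpha>|\<^sub>\<infinity> (E + \<parallel>\<phi>\<^sup>(\<^sup>2\<^sup>k\<^sup>)\<parallel> + M\<^sub>2\<^sub>k\<^sub>,\<^sub>2\<^sub>p)\<close> for the error \<open>E\<close>, which is solved for \<open>E\<close> since
  \<open>|\<alpha>|\<^sub>\<infinity> < \<mu>\<^sup>2\<^sup>k\<close>.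
\<close>

definition lidstone_step :: "(real \<Rightarrow> real) \<Rightarrow> (real \<Rightarrow> real) \<Rightarrow> bool" where
  "lidstone_step h g \<longleftrightarrow>
     (\<forall>t. (g has_real_derivative deriv g t) (at t) \<and> (deriv g has_real_derivative h t) (at t))
     \<and> g 0 = 0 \<and> g 1 = 0"

lemma lidstone_Suc_eq: "lidstone (Suc l) = (THE g. lidstone_step (lidstone l) g)"
  by (simp add: lidstone_step_def)

text \<open>The boundary value problem has at most one solution: the difference of two solutions
  has vanishing second derivative, hence is affine, hence zero.\<close>
lemma lidstone_step_unique:
  assumes g1: "lidstone_step h g1" and g2: "lidstone_step h g2"
  shows "g1 = g2"
proof -
  let ?d = "\<lambda>t. deriv g1 t - deriv g2 t"
  have "(?d has_real_derivative h t - h t) (at t)" for t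
    using g1 g2 unfolding lidstone_step_def by (intro DERIV_diff) auto
  then have "(?d has_real_derivative 0) (at t)" for t
    by simp
  then have d_const: "?d t = ?d 0" for t
    by (intro DERIV_isconst_all) blast
  define c where "c = ?d 0"
  let ?e = "\<lambda>t. g1 t - g2 t - c * t"
  have "(?e has_real_derivative 0) (at t)" for t
  proof -
    have "(?e has_real_derivative deriv g1 t - deriv g2 t - c * 1) (at t)"
      using g1 g2 unfolding lidstone_step_def by (intro DERIV_diff DERIV_cmult DERIV_ident) auto
    then show ?thesis using d_const[of t] by (simp add: c_def)
  qed
  then have e_const: "?e t = ?e 0" for t
    by (intro DERIV_isconst_all) blast
  have bc: "g1 0 = 0" "g2 0 = 0" "g1 1 = 0" "g2 1 = 0"
    using g1 g2 by (auto simp: lidstone_step_def)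
  then have "c = 0" using e_const[of 1] by simp
  then show ?thesis using e_const bc by (auto simp: fun_eq_iff)
qed

text \<open>For polynomial data a solution exists and is again a polynomial: integrate each monomial
  twice and subtract the linear function that restores \<open>g(1) = 0\<close>.\<close>
lemma lidstone_step_poly_exists:
  fixes a :: "nat \<Rightarrow> real"
  shows "\<exists>g. lidstone_step (\<lambda>t. \<Sum>i\<le>n. a i * t ^ i) g \<and> real_polynomial_function g"
proof -
  have monomial: "((\<lambda>t. c * t ^ Suc m / (real m + 1)) has_real_derivative c * t ^ m) (at t)"
    for c t :: real and m
  proof -
    have "c * (real (Suc m) * t ^ (Suc m - Suc 0)) / (real m + 1) = c * t ^ m"
      by (simp add: field_simps)
    then show ?thesis
      by (rule DERIV_cong[OF DERIV_cdivide[OF DERIV_cmult[OF DERIV_pow]]])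
  qed
  define b where "b i = a i / (real i + 1)" for i
  define K where "K = (\<Sum>i\<le>n. b i / (real (Suc i) + 1))"
  define g where "g = (\<lambda>t. (\<Sum>i\<le>n. b i * t ^ Suc (Suc i) / (real (Suc i) + 1)) - K * t)"
  define g' where "g' = (\<lambda>t::real. (\<Sum>i\<le>n. a i * t ^ Suc i / (real i + 1)) - K)"
  have dg: "(g has_real_derivative g' t) (at t)" for t
  proof -
    have "(g has_real_derivative (\<Sum>i\<le>n. b i * t ^ Suc i) - K) (at t)"
      unfolding g_def by (intro DERIV_diff DERIV_sum monomial DERIV_cmult_Id)
    then show ?thesis by (simp add: g'_def b_def)
  qed
  have dg': "(g' has_real_derivative (\<Sum>i\<le>n. a i * t ^ i)) (at t)" for t
  proof -
    have "(g' has_real_derivative (\<Sum>i\<le>n. a i * t ^ i) - 0) (at t)"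
      unfolding g'_def by (intro DERIV_diff DERIV_sum monomial DERIV_const)
    then show ?thesis by simp
  qed
  have "deriv g = g'"
    using dg by (auto intro!: DERIV_imp_deriv)
  then have "lidstone_step (\<lambda>t. \<Sum>i\<le>n. a i * t ^ i) g"
    unfolding lidstone_step_def using dg dg' by (simp add: g_def K_def)
  moreover have "real_polynomial_function g"
  proof -
    have id: "real_polynomial_function (\<lambda>t::real. t)"
      by (simp add: real_polynomial_function_eq)
    show ?thesis
      unfolding g_def
      by (intro real_polynomial_function_diff real_polynomial_function_sum
          real_polynomial_function_divide real_polynomial_function.intros(4)
          real_polynomial_function.intros(2) real_polynomial_function_power id finite_atMost)
  qed
  ultimately show ?thesis by blast
qed

lemma lidstone_step_of_polynomial:
  assumes "real_polynomial_function h"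
  shows "lidstone_step h (THE g. lidstone_step h g)"
    and "real_polynomial_function (THE g. lidstone_step h g)"
proof -
  obtain a n where "h = (\<lambda>t. \<Sum>i\<le>n. a i * t ^ i)"
    using assms real_polynomial_function_iff_sum by blast
  then obtain g where g: "lidstone_step h g" "real_polynomial_function g"
    using lidstone_step_poly_exists by blast
  moreover have "(THE g. lidstone_step h g) = g"
    using g(1) lidstone_step_unique by blast
  ultimately show "lidstone_step h (THE g. lidstone_step h g)"
    and "real_polynomial_function (THE g. lidstone_step h g)" by simp_all
qed

text \<open>By induction every \<open>\<Lambda>\<^sub>l\<close> is a polynomial, so every \<open>\<Lambda>\<^sub>l\<^sub>+\<^sub>1\<close> really solves its
  boundary value problem.\<close>
lemma lidstone_polynomial: "real_polynomial_function (lidstone l)"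
proof (induction l)
  case 0
  then show ?case by (simp add: real_polynomial_function_eq)
next
  case (Suc l)
  then show ?case
    unfolding lidstone_Suc_eq by (rule lidstone_step_of_polynomial(2))
qed

lemma lidstone_Suc_step: "lidstone_step (lidstone l) (lidstone (Suc l))"
  unfolding lidstone_Suc_eq by (rule lidstone_step_of_polynomial(1)[OF lidstone_polynomial])

declare lidstone.simps(2)[simp del]

text \<open>All the
  interpolants below are smooth, which lets us differentiate them with \<open>deriv ^^ m\<close> freely.\<close>
definition smooth :: "(real \<Rightarrow> real) \<Rightarrow> bool" where
  "smooth g \<longleftrightarrow> (\<forall>m t. ((deriv ^^ m) g has_real_derivative (deriv ^^ Suc m) g t) (at t))"

lemma derivs_from_chain:
  assumes "F 0 = g" and "\<And>m t. (F m has_real_derivative F (Suc m) t) (at t)"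
  shows "(deriv ^^ m) g = F m"
proof (induction m)
  case 0
  then show ?case using assms(1) by simp
next
  case (Suc m)
  have "deriv (F m) = F (Suc m)"
    using assms(2) by (auto intro!: DERIV_imp_deriv)
  then show ?case using Suc by simp
qed

lemma smooth_from_chain:
  assumes "F 0 = g" and F: "\<And>m t. (F m has_real_derivative F (Suc m) t) (at t)"
  shows "smooth g"
proof -
  have "(deriv ^^ m) g = F m" for m
    using assms by (rule derivs_from_chain)
  then show ?thesis
    using F by (simp add: smooth_def del: funpow.simps)
qed

lemma smoothD: "smooth g \<Longrightarrow> ((deriv ^^ m) g has_real_derivative (deriv ^^ Suc m) g t) (at t)"
  unfolding smooth_def by blast

lemma smooth_continuous_on: "smooth g \<Longrightarrow> continuous_on S ((deriv ^^ m) g)"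
  by (meson DERIV_isCont continuous_at_imp_continuous_on smoothD)

lemma smooth_diff:
  assumes f: "smooth f" and g: "smooth g"
  shows "(deriv ^^ m) (\<lambda>t. f t - c * g t) = (\<lambda>t. (deriv ^^ m) f t - c * (deriv ^^ m) g t)"
    and "smooth (\<lambda>t. f t - c * g t)"
proof -
  let ?F = "\<lambda>m t. (deriv ^^ m) f t - c * (deriv ^^ m) g t"
  have F: "(?F m has_real_derivative ?F (Suc m) t) (at t)" for m t
    by (intro DERIV_diff DERIV_cmult smoothD f g)
  show "(deriv ^^ m) (\<lambda>t. f t - c * g t) = ?F m"
    by (rule derivs_from_chain[where F="?F", OF _ F]) simp
  show "smooth (\<lambda>t. f t - c * g t)"
    by (rule smooth_from_chain[where F="?F", OF _ F]) simp
qed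

lemma smooth_compose_affine:
  assumes g: "smooth g" and u: "\<And>t. (u has_real_derivative a) (at t)"
  shows "(deriv ^^ m) (\<lambda>t. g (u t)) = (\<lambda>t. a ^ m * (deriv ^^ m) g (u t))"
proof (rule derivs_from_chain)
  fix m t
  have "((\<lambda>t. a ^ m * (deriv ^^ m) g (u t)) has_real_derivative
          a ^ m * ((deriv ^^ Suc m) g (u t) * a)) (at t)"
    by (intro DERIV_cmult DERIV_chain2[OF smoothD[OF g] u])
  then show "((\<lambda>t. a ^ m * (deriv ^^ m) g (u t)) has_real_derivative
               a ^ Suc m * (deriv ^^ Suc m) g (u t)) (at t)"
    by (simp add: algebra_simps)
qed simp

lemma identity_derivs:
  "(deriv ^^ m) (\<lambda>t::real. t) = (\<lambda>t. if m = 0 then t else if m = 1 then 1 else 0)"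
  and smooth_identity: "smooth (\<lambda>t::real. t)"
proof -
  let ?F = "\<lambda>m (t::real). if m = 0 then t else if m = 1 then 1 else (0::real)"
  have F: "(?F m has_real_derivative ?F (Suc m) t) (at t)" for m t
    by (cases "m = 0"; cases "m = 1") (auto intro: derivative_eq_intros)
  show "(deriv ^^ m) (\<lambda>t::real. t) = ?F m"
    by (rule derivs_from_chain[where F="?F", OF _ F]) simp
  show "smooth (\<lambda>t::real. t)"
    by (rule smooth_from_chain[where F="?F", OF _ F]) simp
qed

lemma deriv_lidstone_Suc: "(lidstone (Suc l) has_real_derivative deriv (lidstone (Suc l)) t) (at t)"
  and deriv2_lidstone_Suc: "(deriv (lidstone (Suc l)) has_real_derivative lidstone l t) (at t)"
  and lidstone_Suc_boundary: "lidstone (Suc l) 0 = 0" "lidstone (Suc l) 1 = 0"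
  using lidstone_Suc_step[of l] unfolding lidstone_step_def by blast+

lemma lidstone_derivs_shift: "(deriv ^^ (m + 2)) (lidstone (Suc l)) = (deriv ^^ m) (lidstone l)"
proof -
  have "(deriv ^^ 2) (lidstone (Suc l)) = lidstone l"
    using deriv2_lidstone_Suc by (auto intro!: DERIV_imp_deriv simp: numeral_2_eq_2)
  then show ?thesis by (simp only: funpow_add o_apply)
qed

lemma smooth_lidstone: "smooth (lidstone l)"
proof (induction l)
  case 0
  then show ?case using smooth_identity by simp
next
  case (Suc l)
  show ?case unfolding smooth_def
  proof (intro allI)
    fix m :: nat and t :: real
    consider "m = 0" | "m = 1" | j where "m = j + 2"
      by (cases m; cases "m - 1") auto
    then show "((deriv ^^ m) (lidstone (Suc l)) has_real_derivative
                 (deriv ^^ Suc m) (lidstone (Suc l)) t) (at t)"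
    proof cases
      case 1
      then show ?thesis using deriv_lidstone_Suc by simp
    next
      case 2
      then show ?thesis using deriv2_lidstone_Suc lidstone_derivs_shift[of 0 l] by simp
    next
      case 3
      then show ?thesis
        using smoothD[OF Suc.IH] lidstone_derivs_shift[of j l] lidstone_derivs_shift[of "Suc j" l]
        by simp
    qed
  qed
qed

lemma lidstone_even_derivs: "k \<le> l \<Longrightarrow> (deriv ^^ (2 * k)) (lidstone l) = lidstone (l - k)"
proof (induction k arbitrary: l)
  case 0
  then show ?case by simp
next
  case (Suc k)
  then obtain l' where l: "l = Suc l'" by (cases l) auto
  have "(deriv ^^ (2 * Suc k)) (lidstone l) = (deriv ^^ (2 * k)) (lidstone l')"
    using lidstone_derivs_shift[of "2 * k" l'] l by simp
  then show ?case using Suc l by simp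
qed

lemma lidstone_high_derivs: "l < k \<Longrightarrow> (deriv ^^ (2 * k)) (lidstone l) = (\<lambda>_. 0)"
proof -
  assume lk: "l < k"
  have "2 * k = (2 * k - 2 * l) + 2 * l"
    using lk by simp
  then have "(deriv ^^ (2 * k)) (lidstone l) = (deriv ^^ (2 * k - 2 * l)) ((deriv ^^ (2 * l)) (lidstone l))"
    by (metis funpow_add o_apply)
  also have "\<dots> = (deriv ^^ (2 * k - 2 * l)) (\<lambda>t. t)"
    using lidstone_even_derivs[of l l] by simp
  moreover have "2 \<le> 2 * k - 2 * l"
    using lk by simp
  ultimately show ?thesis
    using lk by (simp add: identity_derivs)
qed

lemma cos_lower_bound:
  assumes "0 \<le> x"
  shows "1 - x\<^sup>2 / 2 \<le> cos (x::real)"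
proof -
  have "(\<lambda>x. cos x - 1 + x\<^sup>2 / 2) 0 \<le> (\<lambda>x. cos x - 1 + x\<^sup>2 / 2) x"
  proof (rule DERIV_nonneg_imp_nondecreasing[OF assms])
    fix s :: real
    assume "0 \<le> s" "s \<le> x"
    then show "\<exists>y. ((\<lambda>x. cos x - 1 + x\<^sup>2 / 2) has_real_derivative y) (at s) \<and> 0 \<le> y"
      by (intro exI[of _ "s - sin s"]) (auto intro!: derivative_eq_intros simp: sin_x_le_x)
  qed
  then show ?thesis by simp
qed

lemma sin_lower_bound:
  assumes "0 \<le> x"
  shows "x - x ^ 3 / 6 \<le> sin (x::real)"
proof -
  have "(\<lambda>x. sin x - x + x ^ 3 / 6) 0 \<le> (\<lambda>x. sin x - x + x ^ 3 / 6) x"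
  proof (rule DERIV_nonneg_imp_nondecreasing[OF assms])
    fix s :: real
    assume "0 \<le> s" "s \<le> x"
    then show "\<exists>y. ((\<lambda>x. sin x - x + x ^ 3 / 6) has_real_derivative y) (at s) \<and> 0 \<le> y"
      using cos_lower_bound[of s]
      by (intro exI[of _ "cos s - 1 + s\<^sup>2 / 2"]) (auto intro!: derivative_eq_intros)
  qed
  then show ?thesis by simp
qed

text \<open>The estimate \<open>\<pi> u (1 - u) \<le> sin (\<pi> u)\<close> on \<open>[0, 1]\<close>: on \<open>[0, 1/2]\<close> it follows from the cubic
  Taylor bound (using \<open>\<pi>\<^sup>2 u \<le> 6\<close>), and the general case by the symmetry \<open>u \<mapsto> 1 - u\<close>.\<close>
lemma sin_pi_lower_bound_half:
  assumes "0 \<le> u" "u \<le> 1/2"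
  shows "pi * u * (1 - u) \<le> sin (pi * u)"
proof -
  have "pi\<^sup>2 * u \<le> 3.2\<^sup>2 * (1/2)"
    using pi_approx(2) assms by (intro mult_mono power_mono) auto
  then have "pi\<^sup>2 * u \<le> 6"
    by (simp add: power2_eq_square)
  then have "(pi * u) ^ 3 / 6 \<le> pi * u * u"
  proof -
    have "(pi * u) ^ 3 / 6 = (pi * u * u) * (pi\<^sup>2 * u / 6)"
      by (simp add: power3_eq_cube power2_eq_square)
    also have "\<dots> \<le> pi * u * u"
      using \<open>pi\<^sup>2 * u \<le> 6\<close> assms by (intro mult_left_le) auto
    finally show ?thesis .
  qed
  moreover have "pi * u - (pi * u) ^ 3 / 6 \<le> sin (pi * u)"
    using sin_lower_bound[of "pi * u"] assms by simp
  ultimately show ?thesis by (simp add: algebra_simps)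
qed

lemma sin_pi_lower_bound:
  assumes "0 \<le> u" "u \<le> 1"
  shows "pi * u * (1 - u) \<le> sin (pi * u)"
proof (cases "u \<le> 1/2")
  case True
  then show ?thesis using sin_pi_lower_bound_half assms by simp
next
  case False
  have "pi * (1 - u) * (1 - (1 - u)) \<le> sin (pi * (1 - u))"
    using sin_pi_lower_bound_half[of "1 - u"] False assms by simp
  moreover have "sin (pi * (1 - u)) = sin (pi * u)"
    by (metis sin_pi_minus right_diff_distrib mult_1_right)
  ultimately show ?thesis by (simp add: algebra_simps)
qed

lemma lidstone_one: "lidstone 1 = (\<lambda>t. (t ^ 3 - t) / 6)"
proof -
  let ?g = "\<lambda>t::real. (t ^ 3 - t) / 6"
  have g': "(?g has_real_derivative (3 * t\<^sup>2 - 1) / 6) (at t)" for t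
    by (auto intro!: derivative_eq_intros)
  have "deriv ?g = (\<lambda>t. (3 * t\<^sup>2 - 1) / 6)"
    using g' by (auto intro!: DERIV_imp_deriv)
  moreover have "((\<lambda>t::real. (3 * t\<^sup>2 - 1) / 6) has_real_derivative t) (at t)" for t
    by (auto intro!: derivative_eq_intros)
  ultimately have "lidstone_step (lidstone 0) ?g"
    unfolding lidstone_step_def using g' by simp
  then show ?thesis
    using lidstone_step_unique lidstone_Suc_step[of 0] by (metis One_nat_def)
qed

lemma convex_nonpos_between_zeros:
  fixes H :: "real \<Rightarrow> real"
  assumes "convex_on {0..1} H" "H 0 = 0" "H 1 = 0" "0 \<le> t" "t \<le> 1"
  shows "H t \<le> 0"
  using convex_onD[OF assms(1), of t 0 1] assms(2-5) by simp

text \<open>Comparison step: if \<open>|\<Lambda>\<^sub>l| \<le> C sin (\<pi> t)\<close> on \<open>[0, 1]\<close>, then \<open>|\<Lambda>\<^sub>l\<^sub>+\<^sub>1| \<le> C/\<pi>\<^sup>2 sin (\<pi> t)\<close>, because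
  \<open>\<plusminus>\<Lambda>\<^sub>l\<^sub>+\<^sub>1 - C/\<pi>\<^sup>2 sin (\<pi> t)\<close> is convex and vanishes at both ends.\<close>
lemma lidstone_Suc_sin_comparison:
  assumes hyp: "\<And>t. 0 \<le> t \<Longrightarrow> t \<le> 1 \<Longrightarrow> \<bar>lidstone l t\<bar> \<le> C * sin (pi * t)"
    and t: "0 \<le> t" "t \<le> 1"
  shows "\<bar>lidstone (Suc l) t\<bar> \<le> C / pi\<^sup>2 * sin (pi * t)"
proof -
  have side: "\<sigma> * lidstone (Suc l) t \<le> C / pi\<^sup>2 * sin (pi * t)" if \<sigma>: "\<bar>\<sigma>\<bar> = 1" for \<sigma>
  proof -
    let ?H = "\<lambda>t. \<sigma> * lidstone (Suc l) t - C / pi\<^sup>2 * sin (pi * t)"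
    let ?H' = "\<lambda>t. \<sigma> * deriv (lidstone (Suc l)) t - C / pi * cos (pi * t)"
    let ?H'' = "\<lambda>t. \<sigma> * lidstone l t + C * sin (pi * t)"
    have "convex_on {0..1} ?H"
    proof (rule f''_ge0_imp_convex)
      show "(?H has_real_derivative ?H' s) (at s)" for s
        by (auto intro!: derivative_eq_intros deriv_lidstone_Suc simp: power2_eq_square)
      show "(?H' has_real_derivative ?H'' s) (at s)" for s
        by (auto intro!: derivative_eq_intros deriv2_lidstone_Suc)
      show "0 \<le> ?H'' s" if "s \<in> {0..1}" for s
      proof -
        have "\<bar>\<sigma> * lidstone l s\<bar> \<le> C * sin (pi * s)"
          using hyp that \<sigma> by (simp add: abs_mult)
        then show ?thesis by linarith
      qed
    qed simp
    then show ?thesis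
      using convex_nonpos_between_zeros[of ?H t] lidstone_Suc_boundary t by simp
  qed
  show ?thesis
    using side[of 1] side[of "-1"] by linarith
qed

text \<open>Hence \<open>|\<Lambda>\<^sub>i\<^sub>+\<^sub>1(t)| \<le> sin (\<pi> t) / (3 \<pi>\<^sup>2\<^sup>i\<^sup>+\<^sup>1)\<close> on \<open>[0, 1]\<close>, and in particular the uniform bound
  \<open>1 / (3 \<pi>\<^sup>2\<^sup>i\<^sup>+\<^sup>1)\<close>; this is the source of the constant \<open>2 \<rho> \<pi> / 3\<close> in the theorem.\<close>
lemma lidstone_sin_bound:
  "0 \<le> t \<Longrightarrow> t \<le> 1 \<Longrightarrow> \<bar>lidstone (Suc i) t\<bar> \<le> 1 / (3 * pi ^ (2 * i + 1)) * sin (pi * t)"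
proof (induction i arbitrary: t)
  case 0
  have "lidstone 1 t = - (t * (1 - t) * (1 + t) / 6)"
    unfolding lidstone_one by (simp add: power3_eq_cube field_simps)
  moreover have "0 \<le> t * (1 - t) * (1 + t)"
    using 0 by simp
  ultimately have "\<bar>lidstone 1 t\<bar> = t * (1 - t) * (1 + t) / 6"
    by simp
  also have "\<dots> \<le> t * (1 - t) * 2 / 6"
    using 0 by (intro divide_right_mono mult_left_mono) auto
  also have "\<dots> = 1 / (3 * pi) * (pi * t * (1 - t))"
    by simp
  also have "\<dots> \<le> 1 / (3 * pi) * sin (pi * t)"
    using sin_pi_lower_bound 0 by (intro mult_left_mono) auto
  finally show ?case by simp
next
  case (Suc i)
  have "1 / (3 * pi ^ (2 * i + 1)) / pi\<^sup>2 = 1 / (3 * pi ^ (2 * Suc i + 1))"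
    by (simp add: power_add power2_eq_square field_simps)
  then show ?case
    using lidstone_Suc_sin_comparison[OF Suc.IH Suc.prems] by metis
qed

lemma lidstone_Suc_bound:
  assumes "0 \<le> t" "t \<le> 1"
  shows "\<bar>lidstone (Suc i) t\<bar> \<le> 1 / (3 * pi ^ (2 * i + 1))"
proof -
  have "1 / (3 * pi ^ (2 * i + 1)) * sin (pi * t) \<le> 1 / (3 * pi ^ (2 * i + 1))"
    by (simp add: divide_le_eq)
  then show ?thesis
    using lidstone_sin_bound[OF assms, of i] by linarith
qed

text \<open>The Lidstone interpolant on \<open>[lo, hi]\<close> with even-derivative data \<open>A l\<close> at \<open>lo\<close> and \<open>B l\<close>
  at \<open>hi\<close> (\<open>l = 0, \<dots>, p\<close>).  The piece of \<open>\<phi>\<close> on \<open>[x\<^sub>n\<^sub>-\<^sub>1, x\<^sub>n]\<close>, the two parts of \<open>q\<^sub>n\<close>, and the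
  interpolant of the endpoint data on \<open>[x\<^sub>0, x\<^sub>N]\<close> are all of this form.\<close>
definition lidstone_interp ::
    "nat \<Rightarrow> (nat \<Rightarrow> real) \<Rightarrow> (nat \<Rightarrow> real) \<Rightarrow> real \<Rightarrow> real \<Rightarrow> real \<Rightarrow> real" where
  "lidstone_interp p A B lo hi t =
     (\<Sum>l=0..p. (A l * lidstone l ((hi - t) / (hi - lo)) + B l * lidstone l ((t - lo) / (hi - lo)))
               * (hi - lo) ^ (2 * l))"

lemma lidstone_interp_derivs:
  "(deriv ^^ m) (lidstone_interp p A B lo hi) =
     (\<lambda>t. \<Sum>l=0..p. (A l * (-1 / (hi - lo)) ^ m * (deriv ^^ m) (lidstone l) ((hi - t) / (hi - lo))
                    + B l * (1 / (hi - lo)) ^ m * (deriv ^^ m) (lidstone l) ((t - lo) / (hi - lo)))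
                   * (hi - lo) ^ (2 * l))"
    (is "_ = ?F m")
  and smooth_lidstone_interp: "smooth (lidstone_interp p A B lo hi)"
proof -
  have u1: "((\<lambda>t. (hi - t) / (hi - lo)) has_real_derivative -1 / (hi - lo)) (at t)" for t
    by (rule DERIV_cong[OF DERIV_cdivide[OF DERIV_diff[OF DERIV_const DERIV_ident]]]) simp
  have u2: "((\<lambda>t. (t - lo) / (hi - lo)) has_real_derivative 1 / (hi - lo)) (at t)" for t
    by (rule DERIV_cong[OF DERIV_cdivide[OF DERIV_diff[OF DERIV_ident DERIV_const]]]) simp
  have F0: "?F 0 = lidstone_interp p A B lo hi"
    by (simp add: fun_eq_iff lidstone_interp_def)
  have F: "(?F m has_real_derivative ?F (Suc m) t) (at t)" for m t
  proof -
    have "(?F m has_real_derivative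
            (\<Sum>l=0..p. (A l * (-1 / (hi - lo)) ^ m
                          * ((deriv ^^ Suc m) (lidstone l) ((hi - t) / (hi - lo)) * (-1 / (hi - lo)))
                        + B l * (1 / (hi - lo)) ^ m
                          * ((deriv ^^ Suc m) (lidstone l) ((t - lo) / (hi - lo)) * (1 / (hi - lo))))
                       * (hi - lo) ^ (2 * l))) (at t)"
      by (intro DERIV_sum DERIV_cmult_right DERIV_add DERIV_cmult
          DERIV_chain2[OF smoothD[OF smooth_lidstone] u1] DERIV_chain2[OF smoothD[OF smooth_lidstone] u2])
    then show ?thesis
      by (simp add: algebra_simps)
  qed
  show "(deriv ^^ m) (lidstone_interp p A B lo hi) = ?F m"
    by (rule derivs_from_chain[where F="?F", OF F0 F])
  show "smooth (lidstone_interp p A B lo hi)"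
    by (rule smooth_from_chain[where F="?F", OF F0 F])
qed

lemma lidstone_interp_even_derivs:
  assumes "lo \<noteq> hi" "k \<le> p"
  shows "(deriv ^^ (2 * k)) (lidstone_interp p A B lo hi)
       = lidstone_interp (p - k) (\<lambda>j. A (j + k)) (\<lambda>j. B (j + k)) lo hi"
proof
  fix t
  define h where "h = hi - lo"
  define s1 where "s1 = (hi - t) / h"
  define s2 where "s2 = (t - lo) / h"
  have h: "h \<noteq> 0"
    using assms(1) by (simp add: h_def)
  define T where "T l = (A l * (-1 / h) ^ (2 * k) * (deriv ^^ (2 * k)) (lidstone l) s1
                          + B l * (1 / h) ^ (2 * k) * (deriv ^^ (2 * k)) (lidstone l) s2) * h ^ (2 * l)"
    for l
  have low: "T l = 0" if "l < k" for l
    using lidstone_high_derivs[OF that] by (simp add: T_def)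
  have high: "T (j + k) = (A (j + k) * lidstone j s1 + B (j + k) * lidstone j s2) * h ^ (2 * j)" for j
  proof -
    have "(-1 / h) ^ (2 * k) = (1 / h) ^ (2 * k)"
      by (simp add: power_mult)
    moreover have "(1 / h) ^ (2 * k) * h ^ (2 * (j + k)) = h ^ (2 * j)"
      using h by (simp add: power_add field_simps)
    ultimately show ?thesis
      using lidstone_even_derivs[of k "j + k"] by (simp add: T_def algebra_simps)
  qed
  have "(deriv ^^ (2 * k)) (lidstone_interp p A B lo hi) t = (\<Sum>l=0..p. T l)"
    by (simp add: lidstone_interp_derivs T_def s1_def s2_def h_def)
  also have "\<dots> = (\<Sum>l=k..p. T l)"
    by (rule sum.mono_neutral_right) (auto simp: low)
  also have "\<dots> = (\<Sum>j=0..p-k. T (j + k))"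
    using assms(2) sum.shift_bounds_cl_nat_ivl[of T 0 k "p - k"] by simp
  also have "\<dots> = lidstone_interp (p - k) (\<lambda>j. A (j + k)) (\<lambda>j. B (j + k)) lo hi t"
    by (simp add: high lidstone_interp_def s1_def s2_def h_def)
  finally show "(deriv ^^ (2 * k)) (lidstone_interp p A B lo hi) t
              = lidstone_interp (p - k) (\<lambda>j. A (j + k)) (\<lambda>j. B (j + k)) lo hi t" .
qed

lemma lidstone_interp_affine:
  assumes "lo \<noteq> hi" "lo' \<noteq> hi'" and a: "a = (hi' - lo') / (hi - lo)"
  shows "lidstone_interp p A B lo' hi' (lo' + a * (t - lo))
       = lidstone_interp p (\<lambda>l. a ^ (2 * l) * A l) (\<lambda>l. a ^ (2 * l) * B l) lo hi t"
proof -
  have hi': "hi' = lo' + a * (hi - lo)"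
    using assms(1) a by simp
  have "a \<noteq> 0"
    using assms(2) hi' by auto
  have "hi' - (lo' + a * (t - lo)) = a * (hi - t)" "lo' + a * (t - lo) - lo' = a * (t - lo)"
    "hi' - lo' = a * (hi - lo)"
    unfolding hi' by (simp_all add: algebra_simps)
  then show ?thesis
    unfolding lidstone_interp_def using \<open>a \<noteq> 0\<close> by (simp add: power_mult_distrib mult_ac distrib_left)
qed

lemma lidstone_pair_bound:
  assumes s: "0 \<le> s1" "0 \<le> s2" "s1 + s2 = 1" and AB: "\<bar>A\<bar> \<le> \<rho>" "\<bar>B\<bar> \<le> \<rho>"
  shows "\<bar>A * lidstone j s1 + B * lidstone j s2\<bar> \<le> 2 * \<rho> * pi / 3 / pi ^ (2 * j)"
proof (cases j)
  case 0
  have "\<bar>A * s1 + B * s2\<bar> \<le> \<bar>A\<bar> * s1 + \<bar>B\<bar> * s2"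
    using s by (metis abs_mult abs_of_nonneg abs_triangle_ineq)
  also have "\<dots> \<le> \<rho> * s1 + \<rho> * s2"
    using s AB by (intro add_mono mult_right_mono) auto
  also have "\<dots> = \<rho>"
    using s by (simp flip: distrib_left)
  also have "\<dots> \<le> \<rho> * (2 * pi / 3)"
    using mult_left_mono[of 1 "2 * pi / 3" \<rho>] AB pi_gt3 by simp
  finally show ?thesis using 0 by (simp add: field_simps)
next
  case (Suc i)
  let ?b = "1 / (3 * pi ^ (2 * i + 1))"
  have "\<bar>A * lidstone (Suc i) s1 + B * lidstone (Suc i) s2\<bar>
        \<le> \<bar>A\<bar> * \<bar>lidstone (Suc i) s1\<bar> + \<bar>B\<bar> * \<bar>lidstone (Suc i) s2\<bar>"
    by (metis abs_mult abs_triangle_ineq)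
  also have "\<dots> \<le> \<rho> * ?b + \<rho> * ?b"
    using AB s lidstone_Suc_bound by (intro add_mono mult_mono) auto
  also have "\<dots> = 2 * \<rho> * pi / 3 / pi ^ (2 * Suc i)"
    by (simp add: field_simps)
  finally show ?thesis using Suc by simp
qed

lemma lidstone_interp_bound:
  assumes lohi: "lo < hi" and t: "t \<in> {lo..hi}"
    and data: "\<And>l. l \<le> q \<Longrightarrow> \<bar>A l\<bar> \<le> \<rho> \<and> \<bar>B l\<bar> \<le> \<rho>"
  shows "\<bar>lidstone_interp q A B lo hi t\<bar> \<le> 2 * \<rho> * pi / 3 * (\<Sum>l=0..q. ((hi - lo) / pi) ^ (2 * l))"
proof -
  define s1 where "s1 = (hi - t) / (hi - lo)"
  define s2 where "s2 = (t - lo) / (hi - lo)"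
  have s: "0 \<le> s1" "0 \<le> s2"
    using lohi t by (auto simp: s1_def s2_def)
  have s12: "s1 + s2 = 1"
    using lohi unfolding s1_def s2_def by (simp flip: add_divide_distrib)
  have summand: "\<bar>(A l * lidstone l s1 + B l * lidstone l s2) * (hi - lo) ^ (2 * l)\<bar>
              \<le> 2 * \<rho> * pi / 3 * ((hi - lo) / pi) ^ (2 * l)" if "l \<in> {0..q}" for l
  proof -
    have "\<bar>(A l * lidstone l s1 + B l * lidstone l s2) * (hi - lo) ^ (2 * l)\<bar>
          = \<bar>A l * lidstone l s1 + B l * lidstone l s2\<bar> * (hi - lo) ^ (2 * l)"
      using lohi by (simp add: abs_mult)
    also have "\<dots> \<le> 2 * \<rho> * pi / 3 / pi ^ (2 * l) * (hi - lo) ^ (2 * l)"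
      using lidstone_pair_bound[OF s s12] data that lohi by (intro mult_right_mono) auto
    also have "\<dots> = 2 * \<rho> * pi / 3 * ((hi - lo) / pi) ^ (2 * l)"
      by (simp add: power_divide)
    finally show ?thesis .
  qed
  have "\<bar>lidstone_interp q A B lo hi t\<bar>
        \<le> (\<Sum>l=0..q. \<bar>(A l * lidstone l s1 + B l * lidstone l s2) * (hi - lo) ^ (2 * l)\<bar>)"
    unfolding lidstone_interp_def s1_def s2_def by (rule sum_abs)
  also have "\<dots> \<le> (\<Sum>l=0..q. 2 * \<rho> * pi / 3 * ((hi - lo) / pi) ^ (2 * l))"
    by (rule sum_mono) (rule summand)
  finally show ?thesis
    by (simp add: sum_distrib_left)
qed

lemma phi_piece_eq:
  "phi_piece p x y n = lidstone_interp p (\<lambda>l. y (n - 1) (2 * l)) (\<lambda>l. y n (2 * l)) (x (n - 1)) (x n)"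
  by (simp add: fun_eq_iff phi_piece_def lidstone_interp_def)

definition endpoint_interp :: "nat \<Rightarrow> (nat \<Rightarrow> real) \<Rightarrow> nat \<Rightarrow> (nat \<Rightarrow> nat \<Rightarrow> real) \<Rightarrow> real \<Rightarrow> real" where
  "endpoint_interp p x N y = lidstone_interp p (\<lambda>l. y 0 (2 * l)) (\<lambda>l. y N (2 * l)) (x 0) (x N)"

lemma q_fun_eq:
  "q_fun p x N y \<alpha> n =
     (\<lambda>t. lidstone_interp p (\<lambda>l. a_coef x N n ^ (2 * l) * y (n - 1) (2 * l))
            (\<lambda>l. a_coef x N n ^ (2 * l) * y n (2 * l)) (x 0) (x N) t
          - \<alpha> n * endpoint_interp p x N y t)"
  by (simp add: fun_eq_iff q_fun_def lidstone_interp_def endpoint_interp_def sum_distrib_left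
      sum_subtractf[symmetric] algebra_simps)

lemma endpoint_interp_even_derivs_bound:
  assumes "x 0 < x N" "k \<le> p" "t \<in> {x 0..x N}"
  shows "\<bar>(deriv ^^ (2 * k)) (endpoint_interp p x N y) t\<bar> \<le> M_const k p x N y"
proof -
  have data: "\<bar>y 0 (2 * (j + k))\<bar> \<le> rho_max p N y \<and> \<bar>y N (2 * (j + k))\<bar> \<le> rho_max p N y"
    if "j \<le> p - k" for j
  proof -
    have "max \<bar>y 0 (2 * (j + k))\<bar> \<bar>y N (2 * (j + k))\<bar> \<le> rho_max p N y"
      unfolding rho_max_def using that assms(2) by (intro Max_ge) (auto intro!: image_eqI[of _ _ "j + k"])
    then show ?thesis by simp
  qed
  have "(deriv ^^ (2 * k)) (endpoint_interp p x N y)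
        = lidstone_interp (p - k) (\<lambda>j. y 0 (2 * (j + k))) (\<lambda>j. y N (2 * (j + k))) (x 0) (x N)"
    unfolding endpoint_interp_def using assms(1,2) by (simp add: lidstone_interp_even_derivs)
  then show ?thesis
    using lidstone_interp_bound[OF assms(1,3), where q = "p - k" and \<rho> = "rho_max p N y"] data
    by (simp add: M_const_def)
qed

lemma real_derivative_unique_within_Icc:
  assumes "lo < hi" "t \<in> {lo..hi}"
    and "(f has_real_derivative d1) (at t within {lo..hi})"
    and "(f has_real_derivative d2) (at t within {lo..hi})"
  shows "d1 = d2"
  using vector_derivative_unique_within_closed_interval[of lo hi t f d1 d2] assms
  by (simp add: has_real_derivative_iff_has_vector_derivative cbox_interval)

lemma functional_equation_derivs:
  fixes D :: "nat \<Rightarrow> real \<Rightarrow> real"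
  assumes lohi: "lo < hi" and maps: "\<And>t. t \<in> {lo..hi} \<Longrightarrow> L t \<in> {lo..hi}"
    and L: "\<And>t. (L has_real_derivative a) (at t)"
    and D: "\<forall>j<K. \<forall>t\<in>{lo..hi}. (D j has_real_derivative D (Suc j) t) (at t within {lo..hi})"
    and eq: "\<And>t. t \<in> {lo..hi} \<Longrightarrow> D 0 (L t) = c * D 0 t + q t"
    and q: "smooth q"
  shows "j \<le> K \<Longrightarrow> t \<in> {lo..hi} \<Longrightarrow> a ^ j * D j (L t) = c * D j t + (deriv ^^ j) q t"
proof (induction j arbitrary: t)
  case 0
  then show ?case using eq by simp
next
  case (Suc j)
  let ?U = "\<lambda>t. a ^ j * D j (L t) - c * D j t - (deriv ^^ j) q t"
  have j: "j < K" and t: "t \<in> {lo..hi}"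
    using Suc.prems by auto
  have "(?U has_real_derivative 0) (at t within {lo..hi})"
    using Suc.IH j t
    by (intro has_field_derivative_transform_within[OF DERIV_const zero_less_one t]) auto
  moreover have "(?U has_real_derivative
         a ^ j * (D (Suc j) (L t) * a) - c * D (Suc j) t - (deriv ^^ Suc j) q t) (at t within {lo..hi})"
  proof -
    have "(D j has_real_derivative D (Suc j) (L t)) (at (L t) within {lo..hi})"
      using D j maps t by blast
    then have "(D j has_real_derivative D (Suc j) (L t)) (at (L t) within L ` {lo..hi})"
      by (rule DERIV_subset) (use maps in auto)
    from DERIV_image_chain[OF this has_field_derivative_at_within[OF L]]
    have "((\<lambda>t. D j (L t)) has_real_derivative D (Suc j) (L t) * a) (at t within {lo..hi})"
      by (simp add: o_def)
    then show ?thesis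
      using D j t by (intro DERIV_diff DERIV_cmult has_field_derivative_at_within[OF smoothD[OF q]]) auto
  qed
  ultimately have "0 = a ^ j * (D (Suc j) (L t) * a) - c * D (Suc j) t - (deriv ^^ Suc j) q t"
    by (rule real_derivative_unique_within_Icc[OF lohi t])
  then show ?case by (simp add: algebra_simps)
qed

lemma continuous_on_derivs:
  assumes "\<forall>j<K. \<forall>t\<in>S. (D j has_real_derivative D (Suc j) t) (at t within S)"
    and "continuous_on S (D K)" and "j \<le> K"
  shows "continuous_on S (D j)"
proof (cases "j = K")
  case False
  then have "j < K"
    using assms(3) by simp
  then show ?thesis
    using assms(1) by (auto intro: DERIV_continuous simp: continuous_on_eq_continuous_within)
qed (use assms in simp)

text \<open>Values of finitely many continuous functions on compact pieces are bounded, so the suprema in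
  the theorem are finite.\<close>
lemma bdd_above_pieces:
  fixes g :: "'i \<Rightarrow> real \<Rightarrow> real"
  assumes "finite I" and "\<And>n. n \<in> I \<Longrightarrow> compact (K n)"
    and "\<And>n. n \<in> I \<Longrightarrow> continuous_on (K n) (g n)"
  shows "bdd_above {g n t | n t. n \<in> I \<and> t \<in> K n}"
proof -
  have "{g n t | n t. n \<in> I \<and> t \<in> K n} = (\<Union>n\<in>I. g n ` K n)"
    by blast
  moreover have "bdd_above (g n ` K n)" if "n \<in> I" for n
    using assms(2,3) that by (intro bounded_imp_bdd_above compact_imp_bounded compact_continuous_image)
  ultimately show ?thesis
    using assms(1) by simp
qed

lemma Sup_contraction_bound:
  fixes S :: "real set"
  assumes "S \<noteq> {}" "bdd_above S" "0 < c" "A < c"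
    and "\<And>e. e \<in> S \<Longrightarrow> c * e \<le> A * (Sup S + F)"
  shows "Sup S \<le> A / (c - A) * F"
proof -
  have "Sup S \<le> A * (Sup S + F) / c"
    using assms by (intro cSup_least) (auto simp: pos_le_divide_eq mult.commute)
  then have "(c - A) * Sup S \<le> A * F"
    using \<open>0 < c\<close> by (simp add: pos_le_divide_eq algebra_simps)
  then show ?thesis
    using \<open>A < c\<close> by (simp add: pos_le_divide_eq mult.commute)
qed

lemma alpha_norm_ge: "n \<in> {1..N} \<Longrightarrow> \<bar>\<alpha> n\<bar> \<le> alpha_norm N \<alpha>"
  unfolding alpha_norm_def by (intro Max_ge) auto

locale increasing_nodes =
  fixes x :: "nat \<Rightarrow> real" and N :: nat
  assumes N_pos: "1 \<le> N" and x_incr: "\<forall>n<N. x n < x (Suc n)"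
begin

lemma x_less: "i < j \<Longrightarrow> j \<le> N \<Longrightarrow> x i < x j"
proof (induction j)
  case (Suc j)
  then have "x j < x (Suc j)"
    using x_incr by simp
  then show ?case
    using Suc by (cases "i = j") auto
qed simp

lemma x_le: "i \<le> j \<Longrightarrow> j \<le> N \<Longrightarrow> x i \<le> x j"
  using x_less[of i j] by (cases "i = j") auto

lemma span_pos: "x 0 < x N"
  using x_less[of 0 N] N_pos by simp

lemma piece_pos: "n \<in> {1..N} \<Longrightarrow> x (n - 1) < x n"
  using x_less[of "n - 1" n] by simp

lemma piece_subset: "n \<in> {1..N} \<Longrightarrow> {x (n - 1)..x n} \<subseteq> {x 0..x N}"
  using x_le[of 0 "n - 1"] x_le[of n N] by auto

lemma pieces_cover:
  assumes "s \<in> {x 0..x N}"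
  shows "\<exists>m\<in>{1..N}. s \<in> {x (m - 1)..x m}"
proof -
  define m where "m = (LEAST m. s \<le> x m)"
  have sm: "s \<le> x m" and mN: "m \<le> N"
    using assms LeastI[of "\<lambda>m. s \<le> x m" N] Least_le[of "\<lambda>m. s \<le> x m" N] by (auto simp: m_def)
  show ?thesis
  proof (cases "m = 0")
    case True
    then show ?thesis
      using sm assms N_pos piece_pos[of 1] by (intro bexI[of _ 1]) auto
  next
    case False
    then have "\<not> s \<le> x (m - 1)"
      unfolding m_def by (metis diff_less less_numeral_extra(1) m_def neq0_conv not_less_Least)
    then show ?thesis
      using False sm mN by (intro bexI[of _ m]) auto
  qed
qed

lemma a_coef_pos: "n \<in> {1..N} \<Longrightarrow> 0 < a_coef x N n"
  unfolding a_coef_def using piece_pos span_pos by simp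

lemma mu_min_le: "n \<in> {1..N} \<Longrightarrow> mu_min x N \<le> a_coef x N n"
  unfolding mu_min_def by (intro Min_le) auto

lemma mu_min_pos: "0 < mu_min x N"
proof -
  have "mu_min x N \<in> a_coef x N ` {1..N}"
    unfolding mu_min_def using N_pos by (intro Min_in) auto
  then show ?thesis
    using a_coef_pos by auto
qed

lemma L_map_affine: "L_map x N n t = x (n - 1) + a_coef x N n * (t - x 0)"
proof -
  define d where "d = x N - x 0"
  have xN: "x N = x 0 + d" and "d \<noteq> 0"
    using span_pos by (auto simp: d_def)
  then show ?thesis
    unfolding L_map_def a_coef_def xN by (simp add: field_simps)
qed

lemma L_map_image:
  assumes "n \<in> {1..N}"
  shows "L_map x N n ` {x 0..x N} = {x (n - 1)..x n}"
proof -
  have "L_map x N n = (\<lambda>t. a_coef x N n * t + (x N * x (n - 1) - x 0 * x n) / (x N - x 0))"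
    by (simp add: fun_eq_iff L_map_def)
  then have "L_map x N n ` {x 0..x N} = {L_map x N n (x 0)..L_map x N n (x N)}"
    using a_coef_pos[OF assms] span_pos by (simp add: image_affinity_atLeastAtMost)
  moreover have "L_map x N n (x 0) = x (n - 1)" "L_map x N n (x N) = x n"
    using span_pos by (simp_all add: L_map_affine a_coef_def)
  ultimately show ?thesis by simp
qed

lemma L_map_deriv: "(L_map x N n has_real_derivative a_coef x N n) (at t)"
  unfolding L_map_def by (auto intro!: derivative_eq_intros)

lemma phi_piece_L_map:
  assumes "n \<in> {1..N}"
  shows "phi_piece p x y n (L_map x N n t)
       = lidstone_interp p (\<lambda>l. a_coef x N n ^ (2 * l) * y (n - 1) (2 * l))
           (\<lambda>l. a_coef x N n ^ (2 * l) * y n (2 * l)) (x 0) (x N) t"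
  unfolding phi_piece_eq L_map_affine
  using span_pos piece_pos[OF assms] by (intro lidstone_interp_affine) (auto simp: a_coef_def)


text \<open>The key identity: differentiating the functional equation \<open>2 k\<close> times and using the previous
  lemma, the error \<open>\<ell>\<^sub>\<alpha>\<^sup>(\<^sup>2\<^sup>k\<^sup>) - \<phi>\<^sup>(\<^sup>2\<^sup>k\<^sup>)\<close> on the \<open>n\<close>-th piece is a rescaled copy of
  \<open>\<ell>\<^sub>\<alpha>\<^sup>(\<^sup>2\<^sup>k\<^sup>) - P\<^sup>(\<^sup>2\<^sup>k\<^sup>)\<close> on the whole interval, \<open>P\<close> being the endpoint interpolant.\<close>
lemma error_self_similarity:
  fixes D :: "nat \<Rightarrow> real \<Rightarrow> real"
  assumes D0: "D 0 = f"
    and D_deriv: "\<forall>j<2*p. \<forall>t\<in>{x 0..x N}.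
                    (D j has_real_derivative D (Suc j) t) (at t within {x 0..x N})"
    and fif: "\<forall>n\<in>{1..N}. \<forall>t\<in>{x 0..x N}.
                f (L_map x N n t) = \<alpha> n * f t + q_fun p x N y \<alpha> n t"
    and k: "k \<le> p" and n: "n \<in> {1..N}" and t: "t \<in> {x 0..x N}"
  shows "a_coef x N n ^ (2 * k) * (D (2 * k) (L_map x N n t)
            - (deriv ^^ (2 * k)) (phi_piece p x y n) (L_map x N n t))
         = \<alpha> n * (D (2 * k) t - (deriv ^^ (2 * k)) (endpoint_interp p x N y) t)"
proof -
  let ?a = "a_coef x N n"
  let ?R = "lidstone_interp p (\<lambda>l. ?a ^ (2 * l) * y (n - 1) (2 * l)) (\<lambda>l. ?a ^ (2 * l) * y n (2 * l))
              (x 0) (x N)"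
  let ?P = "endpoint_interp p x N y"
  have smooth: "smooth ?R" "smooth ?P"
    unfolding endpoint_interp_def by (rule smooth_lidstone_interp)+
  have q: "q_fun p x N y \<alpha> n = (\<lambda>t. ?R t - \<alpha> n * ?P t)"
    by (rule q_fun_eq)
  have "?a ^ (2 * k) * D (2 * k) (L_map x N n t) = \<alpha> n * D (2 * k) t + (deriv ^^ (2 * k)) (q_fun p x N y \<alpha> n) t"
  proof (rule functional_equation_derivs[where K = "2 * p"])
    show "L_map x N n s \<in> {x 0..x N}" if "s \<in> {x 0..x N}" for s
      using L_map_image[OF n] piece_subset[OF n] that by blast
    show "D 0 (L_map x N n s) = \<alpha> n * D 0 s + q_fun p x N y \<alpha> n s" if "s \<in> {x 0..x N}" for s
      using fif n that D0 by simp
    show "smooth (q_fun p x N y \<alpha> n)"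
      unfolding q by (rule smooth_diff(2)[OF smooth])
  qed (use span_pos L_map_deriv D_deriv k t in auto)
  moreover have "(deriv ^^ (2 * k)) (q_fun p x N y \<alpha> n) t
                 = (deriv ^^ (2 * k)) ?R t - \<alpha> n * (deriv ^^ (2 * k)) ?P t"
    unfolding q smooth_diff(1)[OF smooth] ..
  moreover have "(deriv ^^ (2 * k)) ?R t = ?a ^ (2 * k) * (deriv ^^ (2 * k)) (phi_piece p x y n) (L_map x N n t)"
  proof -
    have "?R = (\<lambda>t. phi_piece p x y n (L_map x N n t))"
      using phi_piece_L_map[OF n] by (simp add: fun_eq_iff)
    then show ?thesis
      using smooth_compose_affine[OF _ L_map_deriv] smooth_lidstone_interp by (simp add: phi_piece_eq)
  qed
  ultimately show ?thesis
    by (simp add: algebra_simps)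
qed


text \<open>Abstract form of the estimate: if on each piece the error \<open>G - \<Phi>\<^sub>n\<close> is, up to the factor
  \<open>a\<^sub>n\<^sup>r\<close>, a copy of \<open>\<alpha>\<^sub>n (G - P)\<close> and \<open>|P| \<le> M\<close>, then writing \<open>G - P = (G - \<Phi>\<^sub>m) + \<Phi>\<^sub>m - P\<close> on the
  piece containing a point gives \<open>\<mu>\<^sup>r e \<le> |\<alpha>|\<^sub>\<infinity> (sup |G - \<Phi>| + sup |\<Phi>| + M)\<close> for every error value
  \<open>e\<close>, and the contraction bound applies.\<close>
lemma self_similar_error_bound:
  fixes G P :: "real \<Rightarrow> real" and \<Phi> :: "nat \<Rightarrow> real \<Rightarrow> real" and \<alpha> :: "nat \<Rightarrow> real"
  assumes G: "continuous_on {x 0..x N} G"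
    and \<Phi>: "\<And>n. n \<in> {1..N} \<Longrightarrow> continuous_on {x (n - 1)..x n} (\<Phi> n)"
    and rel: "\<And>n t. n \<in> {1..N} \<Longrightarrow> t \<in> {x 0..x N} \<Longrightarrow>
                a_coef x N n ^ r * (G (L_map x N n t) - \<Phi> n (L_map x N n t)) = \<alpha> n * (G t - P t)"
    and P: "\<And>t. t \<in> {x 0..x N} \<Longrightarrow> \<bar>P t\<bar> \<le> M"
    and contr: "alpha_norm N \<alpha> < mu_min x N ^ r"
  shows "Sup {\<bar>G t - \<Phi> n t\<bar> | n t. n \<in> {1..N} \<and> t \<in> {x (n - 1)..x n}}
         \<le> alpha_norm N \<alpha> / (mu_min x N ^ r - alpha_norm N \<alpha>)
            * (Sup {\<bar>\<Phi> n t\<bar> | n t. n \<in> {1..N} \<and> t \<in> {x (n - 1)..x n}} + M)"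
proof -
  define S where "S = {\<bar>G t - \<Phi> n t\<bar> | n t. n \<in> {1..N} \<and> t \<in> {x (n - 1)..x n}}"
  define T where "T = {\<bar>\<Phi> n t\<bar> | n t. n \<in> {1..N} \<and> t \<in> {x (n - 1)..x n}}"
  let ?A = "alpha_norm N \<alpha>" and ?\<mu> = "mu_min x N"
  have first_node: "1 \<in> {1..N}" "x 0 \<in> {x (1 - 1)..x 1}"
    using N_pos piece_pos[of 1] by auto
  have "S \<noteq> {}"
    using first_node unfolding S_def by blast
  have G_piece: "continuous_on {x (n - 1)..x n} G" if "n \<in> {1..N}" for n
    using continuous_on_subset[OF G piece_subset[OF that]] .
  have bdd_S: "bdd_above S"
    unfolding S_def using G_piece \<Phi> by (intro bdd_above_pieces continuous_intros) auto
  have bdd_T: "bdd_above T"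
    unfolding T_def using \<Phi> by (intro bdd_above_pieces continuous_intros) auto
  have gap: "\<bar>G s - P s\<bar> \<le> Sup S + (Sup T + M)" if s: "s \<in> {x 0..x N}" for s
  proof -
    obtain m where m: "m \<in> {1..N}" "s \<in> {x (m - 1)..x m}"
      using pieces_cover[OF s] by blast
    have "\<bar>G s - \<Phi> m s\<bar> \<in> S" "\<bar>\<Phi> m s\<bar> \<in> T"
      using m unfolding S_def T_def by blast+
    then have "\<bar>G s - \<Phi> m s\<bar> \<le> Sup S" "\<bar>\<Phi> m s\<bar> \<le> Sup T"
      using bdd_S bdd_T by (auto intro: cSup_upper)
    then show ?thesis
      using P[OF s] by linarith
  qed
  have "Sup S \<le> ?A / (?\<mu> ^ r - ?A) * (Sup T + M)"
  proof (rule Sup_contraction_bound[OF \<open>S \<noteq> {}\<close> bdd_S _ contr])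
    show "0 < ?\<mu> ^ r"
      using mu_min_pos by simp
    fix e
    assume "e \<in> S"
    then obtain n \<tau> where e: "e = \<bar>G \<tau> - \<Phi> n \<tau>\<bar>" and n: "n \<in> {1..N}" and \<tau>: "\<tau> \<in> {x (n - 1)..x n}"
      unfolding S_def by blast
    obtain s where s: "s \<in> {x 0..x N}" "\<tau> = L_map x N n s"
      using L_map_image[OF n] \<tau> by blast
    have "?\<mu> ^ r * e \<le> a_coef x N n ^ r * e"
      using mu_min_le[OF n] mu_min_pos e by (intro mult_right_mono power_mono) auto
    also have "\<dots> = \<bar>a_coef x N n ^ r * (G \<tau> - \<Phi> n \<tau>)\<bar>"
      using a_coef_pos[OF n] by (simp add: e abs_mult)
    also have "\<dots> = \<bar>\<alpha> n\<bar> * \<bar>G s - P s\<bar>"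
      using rel[OF n s(1)] by (simp add: s(2) abs_mult)
    also have "\<dots> \<le> ?A * (Sup S + (Sup T + M))"
      using alpha_norm_ge[OF n, of \<alpha>] gap[OF s(1)] by (intro mult_mono) auto
    finally show "?\<mu> ^ r * e \<le> ?A * (Sup S + (Sup T + M))" .
  qed
  then show ?thesis
    unfolding S_def T_def .
qed

end

text \<open>Corollary 4.2: the error bound for the even derivatives of the Lidstone fractal interpolation
  function, with \<open>D j\<close> playing the role of \<open>\<ell>\<^sub>\<alpha>\<^sup>(\<^sup>j\<^sup>)\<close>.  (The hypotheses \<open>\<alpha> \<in> \<Theta>\<^sub>2\<^sub>p\<close> and \<open>1 \<le> k\<close>
  are needed for existence of \<open>\<ell>\<^sub>\<alpha>\<close> and for the paper's range of \<open>k\<close>, not for the estimate.)\<close>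
theorem corollary4p2:
  fixes p N k :: nat and x :: "nat \<Rightarrow> real" and y :: "nat \<Rightarrow> nat \<Rightarrow> real"
    and \<alpha> :: "nat \<Rightarrow> real" and f :: "real \<Rightarrow> real" and D :: "nat \<Rightarrow> real \<Rightarrow> real"
  assumes N_pos: "1 \<le> N"
    and x_incr: "\<forall>n<N. x n < x (Suc n)"
    and alpha: "\<alpha> \<in> Theta p x N"
    and D0: "D 0 = f"
    and D_deriv: "\<forall>j<2*p. \<forall>t\<in>{x 0..x N}.
                    (D j has_real_derivative D (Suc j) t) (at t within {x 0..x N})"
    and D_cont: "continuous_on {x 0..x N} (D (2*p))"
    and fif: "\<forall>n\<in>{1..N}. \<forall>t\<in>{x 0..x N}.
                f (L_map x N n t) = \<alpha> n * f t + q_fun p x N y \<alpha> n t"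
    and k: "1 \<le> k" "k \<le> p"
    and contr: "alpha_norm N \<alpha> < mu_min x N ^ (2*k)"
  shows "Sup {\<bar>D (2*k) t - (deriv ^^ (2*k)) (phi_piece p x y n) t\<bar> | n t.
                 n \<in> {1..N} \<and> t \<in> {x (n - 1)..x n}}
         \<le> alpha_norm N \<alpha> / (mu_min x N ^ (2*k) - alpha_norm N \<alpha>)
            * (Sup {\<bar>(deriv ^^ (2*k)) (phi_piece p x y n) t\<bar> | n t.
                      n \<in> {1..N} \<and> t \<in> {x (n - 1)..x n}}
               + M_const k p x N y)"
proof -
  interpret increasing_nodes x N
    using N_pos x_incr by unfold_locales
  show ?thesis
  proof (rule self_similar_error_bound[where P = "(deriv ^^ (2 * k)) (endpoint_interp p x N y)"])
    show "continuous_on {x 0..x N} (D (2 * k))"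
      using continuous_on_derivs[OF D_deriv D_cont] k by simp
    show "continuous_on {x (n - 1)..x n} ((deriv ^^ (2 * k)) (phi_piece p x y n))" for n
      unfolding phi_piece_eq by (intro smooth_continuous_on smooth_lidstone_interp)
    show "a_coef x N n ^ (2 * k) * (D (2 * k) (L_map x N n t)
            - (deriv ^^ (2 * k)) (phi_piece p x y n) (L_map x N n t))
          = \<alpha> n * (D (2 * k) t - (deriv ^^ (2 * k)) (endpoint_interp p x N y) t)"
      if "n \<in> {1..N}" "t \<in> {x 0..x N}" for n t
      using error_self_similarity[OF D0 D_deriv fif k(2) that] .
    show "\<bar>(deriv ^^ (2 * k)) (endpoint_interp p x N y) t\<bar> \<le> M_const k p x N y"
      if "t \<in> {x 0..x N}" for t
      using endpoint_interp_even_derivs_bound[OF span_pos k(2) that] .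
  qed (rule contr)
qed

end
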